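(* Let $\lambda_1,\lambda_2$ be as in the context and $K\in(-1,1)$. Consider the initial value problem $$b'(v)=\sqrt{\lambda_1^2-K\left(\lambda_1^2\cos^2 b(v)+\lambda_2^2\sin^2 b(v)\right)},\qquad b(0)=0.$$ Its solution $b$ is well-defined on all of $\mathbb{R}$ and satisfies: (1) $b$ is an increasing diffeomorphism from $\mathbb{R}$ to $\mathbb{R}$; (2) $b$ is odd; (3) there exists a real number $W>0$ such that $b(v+W)=b(v)+\pi$ for all $v\in\mathbb{R}$; (4) $b(kW)=k\pi$ for all $k\in\mathbb{Z}$; (5) $b(kW/2)=k\pi/2$ for all odd integers $k$.
   Context: Either $\lambda_1>\lambda_2>0$ or $\lambda_1=\lambda_2=1$. *)

theory Defs
  imports "HOL-Analysis.Analysis"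
begin

definition bRHS :: "real \<Rightarrow> real \<Rightarrow> real \<Rightarrow> real \<Rightarrow> real" where
  "bRHS l1 l2 K x = sqrt (l1\<^sup>2 - K * (l1\<^sup>2 * (cos x)\<^sup>2 + l2\<^sup>2 * (sin x)\<^sup>2))"

definition is_b_solution :: "real \<Rightarrow> real \<Rightarrow> real \<Rightarrow> (real \<Rightarrow> real) \<Rightarrow> bool" where
  "is_b_solution l1 l2 K b \<longleftrightarrow>
     b 0 = 0 \<and> (\<forall>v. (b has_real_derivative bRHS l1 l2 K (b v)) (at v))"

definition real_diffeo :: "(real \<Rightarrow> real) \<Rightarrow> bool" where
  "real_diffeo f \<longleftrightarrow> bij f \<and>
     (\<forall>x. f differentiable (at x)) \<and> continuous_on UNIV (deriv f) \<and>
     (\<forall>y. inv f differentiable (at y)) \<and> continuous_on UNIV (deriv (inv f))"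

end

theory Submission
  imports Defs
begin

text \<open>For an autonomous equation b' = f(b) with f continuous and positive, the time map
  F(x) = \<integral>[0,x] 1/f is strictly increasing and F(c(v)) = v for every solution c, so there is at most
  one solution; if f is also bounded, F is onto and its inverse is a solution. A symmetry of f
  (evenness, \<pi>-periodicity, invariance under x \<mapsto> \<pi> - x) turns the solution into another
  solution, hence into itself: b is odd, b(v + W) = b(v) + \<pi> where b(W) = \<pi>, and
  b(W - v) = \<pi> - b(v), which at v = W/2 gives b(W/2) = \<pi>/2.\<close>

definition solves_autonomous_ivp :: "(real \<Rightarrow> real) \<Rightarrow> (real \<Rightarrow> real) \<Rightarrow> bool" where
  "solves_autonomous_ivp f b \<longleftrightarrow> b 0 = 0 \<and> (\<forall>v. (b has_real_derivative f (b v)) (at v))"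

lemma antiderivative_exists:
  fixes g :: "real \<Rightarrow> real"
  assumes "continuous_on UNIV g"
  obtains G where "\<And>x. (G has_real_derivative g x) (at x)" "G 0 = 0"
proof -
  obtain H where H: "\<And>x. (H has_vector_derivative g x) (at x)"
    using einterval_antiderivative[of "-\<infinity>" "\<infinity>" g] assms
    by (auto simp: continuous_on_eq_continuous_at)
  show thesis
  proof
    show "((\<lambda>x. H x - H 0) has_real_derivative g x) (at x)" for x
      using H[of x] by (auto simp: has_real_derivative_iff_has_vector_derivative
          intro!: derivative_eq_intros)
  qed simp
qed

lemma strict_mono_if_deriv_pos:
  fixes F F' :: "real \<Rightarrow> real"
  assumes "\<And>x. (F has_real_derivative F' x) (at x)" "\<And>x. 0 < F' x"
  shows "strict_mono F"
  by (rule strict_monoI, rule DERIV_pos_imp_increasing) (use assms in blast)+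

lemma surj_if_deriv_ge:
  fixes F F' :: "real \<Rightarrow> real"
  assumes deriv: "\<And>x. (F has_real_derivative F' x) (at x)"
    and ge: "\<And>x. m \<le> F' x" and "0 < m"
  shows "surj F"
proof -
  have slope: "m * (y - x) \<le> F y - F x" if "x \<le> y" for x y
  proof (cases "x = y")
    case False
    with \<open>x \<le> y\<close> obtain z where "F y - F x = (y - x) * F' z"
      using MVT2[of x y F F'] deriv by force
    then show ?thesis
      using ge[of z] \<open>x \<le> y\<close> by (simp add: mult.commute mult_right_mono)
  qed simp
  have "\<exists>x. F x = y" for y
  proof -
    define r where "r = \<bar>y - F 0\<bar> / m"
    have "0 \<le> r" and "m * r = \<bar>y - F 0\<bar>"
      using \<open>0 < m\<close> by (auto simp: r_def)
    then have "F (- r) \<le> y" "y \<le> F r"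
      using slope[of "- r" 0] slope[of 0 r] by auto
    moreover have "continuous_on {- r..r} F"
      using deriv by (meson DERIV_isCont continuous_at_imp_continuous_on)
    ultimately show ?thesis
      using IVT'[of F "- r" y r] \<open>0 \<le> r\<close> by auto
  qed
  then show ?thesis
    by (metis surjI)
qed

lemma time_map_exists:
  fixes f :: "real \<Rightarrow> real"
  assumes "continuous_on UNIV f" and "\<And>x. 0 < f x"
  obtains F where "\<And>x. (F has_real_derivative inverse (f x)) (at x)" "F 0 = 0" "strict_mono F"
proof -
  have "continuous_on UNIV (\<lambda>x. inverse (f x))"
    using assms by (intro continuous_intros) (auto simp: less_imp_neq[symmetric])
  then obtain F where F: "\<And>x. (F has_real_derivative inverse (f x)) (at x)" "F 0 = 0"
    using antiderivative_exists by blast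
  moreover have "strict_mono F"
    using F(1) by (rule strict_mono_if_deriv_pos) (simp add: assms(2))
  ultimately show thesis
    by (rule that)
qed

lemma time_map_comp_solution:
  fixes f F c :: "real \<Rightarrow> real"
  assumes F: "\<And>x. (F has_real_derivative inverse (f x)) (at x)" "F 0 = 0"
    and nonzero: "\<And>x. f x \<noteq> 0" and c: "solves_autonomous_ivp f c"
  shows "F (c v) = v"
proof -
  have "((\<lambda>v. F (c v) - v) has_real_derivative 0) (at v)" for v
  proof -
    have "((\<lambda>v. F (c v) - v) has_real_derivative inverse (f (c v)) * f (c v) - 1) (at v)"
      using c DERIV_chain2[OF F(1)] unfolding solves_autonomous_ivp_def
      by (auto intro!: derivative_eq_intros)
    then show ?thesis
      using nonzero by simp
  qed
  then have "F (c v) - v = F (c 0) - 0"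
    by (rule DERIV_isconst_all[rule_format])
  then show ?thesis
    using c F(2) by (simp add: solves_autonomous_ivp_def)
qed

lemma solves_autonomous_ivp_unique:
  fixes f :: "real \<Rightarrow> real"
  assumes "continuous_on UNIV f" "\<And>x. 0 < f x"
    and b: "solves_autonomous_ivp f b" and c: "solves_autonomous_ivp f c"
  shows "b = c"
proof
  fix v
  obtain F where F: "\<And>x. (F has_real_derivative inverse (f x)) (at x)" "F 0 = 0" "strict_mono F"
    using time_map_exists[OF assms(1,2)] by blast
  have "f x \<noteq> 0" for x
    using assms(2)[of x] by simp
  then have "F (b v) = F (c v)"
    using time_map_comp_solution[OF F(1,2)] b c by metis
  then show "b v = c v"
    using F(3) strict_mono_eq by blast
qed

lemma solves_autonomous_ivp_exists:
  fixes f :: "real \<Rightarrow> real"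
  assumes "continuous_on UNIV f" and pos: "\<And>x. 0 < f x" and bounded: "\<And>x. f x \<le> M"
  obtains b where "solves_autonomous_ivp f b" "bij b"
proof -
  obtain F where F: "\<And>x. (F has_real_derivative inverse (f x)) (at x)" "F 0 = 0" "strict_mono F"
    using time_map_exists[OF assms(1,2)] by blast
  have "0 < M"
    using pos[of 0] bounded[of 0] by linarith
  have "surj F"
    using F(1) by (rule surj_if_deriv_ge[where m = "inverse M"])
      (use pos bounded \<open>0 < M\<close> in \<open>auto intro: le_imp_inverse_le\<close>)
  then have "bij F"
    using F(3) strict_mono_imp_inj_on bij_def by blast
  define b where "b = inv F"
  have Fb: "F (b y) = y" and bF: "b (F x) = x" for x y
    using \<open>bij F\<close> by (simp_all add: b_def bij_is_inj bij_is_surj surj_f_inv_f)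
  have "isCont b y" for y
    using isCont_inverse_function[where d = 1 and f = F and g = b and x = "b y"] F(1) DERIV_isCont
    by (simp add: bF Fb) blast
  then have "(b has_real_derivative f (b y)) (at y)" for y
    using DERIV_inverse_function[where f = F and g = b and D = "inverse (f (b y))"
        and a = "y - 1" and b = "y + 1"] F(1) Fb pos by (simp add: less_imp_neq[symmetric])
  moreover have "b 0 = 0"
    using bF[of 0] F(2) by simp
  moreover have "bij b"
    unfolding b_def using \<open>bij F\<close> by (rule bij_imp_bij_inv)
  ultimately show thesis
    by (intro that) (auto simp: solves_autonomous_ivp_def)
qed

lemma solves_autonomous_ivp_real_diffeo:
  fixes f :: "real \<Rightarrow> real"
  assumes cont: "continuous_on UNIV f" and pos: "\<And>x. 0 < f x"
    and b: "solves_autonomous_ivp f b" and "bij b"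
  shows "real_diffeo b"
proof -
  obtain F where F: "\<And>x. (F has_real_derivative inverse (f x)) (at x)" "F 0 = 0"
    using time_map_exists[OF cont pos] by blast
  have b': "\<And>v. (b has_real_derivative f (b v)) (at v)"
    using b by (simp add: solves_autonomous_ivp_def)
  have "inv b = F"
  proof
    fix y
    have "f x \<noteq> 0" for x
      using pos[of x] by simp
    then have "F (b (inv b y)) = inv b y"
      using time_map_comp_solution[OF F] b by metis
    then show "inv b y = F y"
      using \<open>bij b\<close> by (simp add: bij_is_surj surj_f_inv_f)
  qed
  moreover have "deriv b = (\<lambda>v. f (b v))" and "deriv F = (\<lambda>x. inverse (f x))"
    using b' F(1) by (simp_all add: DERIV_imp_deriv fun_eq_iff)
  moreover have "continuous_on UNIV (\<lambda>v. f (b v))"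
    using b' cont by (metis DERIV_isCont continuous_at_imp_continuous_on continuous_on_compose2 subset_UNIV)
  moreover have "continuous_on UNIV (\<lambda>x. inverse (f x))"
    using cont pos by (intro continuous_intros) (auto simp: less_imp_neq[symmetric])
  ultimately show ?thesis
    unfolding real_diffeo_def using \<open>bij b\<close> b' F(1) real_differentiable_def by metis
qed

lemma solves_autonomous_ivp_strict_mono:
  fixes f :: "real \<Rightarrow> real"
  assumes "\<And>x. 0 < f x" and "solves_autonomous_ivp f b"
  shows "strict_mono b"
  using assms by (auto simp: solves_autonomous_ivp_def intro: strict_mono_if_deriv_pos)

lemma solves_autonomous_ivp_odd:
  fixes f :: "real \<Rightarrow> real"
  assumes b: "solves_autonomous_ivp f b" and unique: "\<And>c. solves_autonomous_ivp f c \<Longrightarrow> c = b"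
    and even: "\<And>x. f (- x) = f x"
  shows "b (- v) = - b v"
proof -
  have b': "(b has_real_derivative f (b v)) (at v)" for v
    using b by (simp add: solves_autonomous_ivp_def)
  have "((\<lambda>v. - b (- v)) has_real_derivative - (f (b (- v)) * - 1)) (at v)" for v
    by (rule DERIV_minus, rule DERIV_chain2[OF b']) (auto intro!: derivative_eq_intros)
  then have "solves_autonomous_ivp f (\<lambda>v. - b (- v))"
    using b even by (simp add: solves_autonomous_ivp_def)
  then have "(\<lambda>v. - b (- v)) = b"
    by (rule unique)
  from fun_cong[OF this, of "- v"] show ?thesis
    by simp
qed

lemma solves_autonomous_ivp_shift:
  fixes f :: "real \<Rightarrow> real"
  assumes b: "solves_autonomous_ivp f b" and unique: "\<And>c. solves_autonomous_ivp f c \<Longrightarrow> c = b"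
    and periodic: "\<And>x. f (x + p) = f x" and "b W = p"
  shows "b (v + W) = b v + p"
proof -
  have b': "(b has_real_derivative f (b v)) (at v)" for v
    using b by (simp add: solves_autonomous_ivp_def)
  have "((\<lambda>v. b (v + W) - p) has_real_derivative f (b (v + W)) * 1 - 0) (at v)" for v
    by (rule DERIV_diff[OF DERIV_chain2[OF b'] DERIV_const]) (auto intro!: derivative_eq_intros)
  then have "solves_autonomous_ivp f (\<lambda>v. b (v + W) - p)"
    using \<open>b W = p\<close> periodic[of "b _ - p"] by (simp add: solves_autonomous_ivp_def)
  then have "(\<lambda>v. b (v + W) - p) = b"
    by (rule unique)
  from fun_cong[OF this, of v] show ?thesis
    by simp
qed

lemma solves_autonomous_ivp_reflect:
  fixes f :: "real \<Rightarrow> real"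
  assumes b: "solves_autonomous_ivp f b" and unique: "\<And>c. solves_autonomous_ivp f c \<Longrightarrow> c = b"
    and symmetric: "\<And>x. f (p - x) = f x" and "b W = p"
  shows "b (W - v) = p - b v"
proof -
  have b': "(b has_real_derivative f (b v)) (at v)" for v
    using b by (simp add: solves_autonomous_ivp_def)
  have "((\<lambda>v. p - b (W - v)) has_real_derivative 0 - f (b (W - v)) * - 1) (at v)" for v
    by (rule DERIV_diff[OF DERIV_const DERIV_chain2[OF b']]) (auto intro!: derivative_eq_intros)
  then have "solves_autonomous_ivp f (\<lambda>v. p - b (W - v))"
    using \<open>b W = p\<close> symmetric by (simp add: solves_autonomous_ivp_def)
  then have "(\<lambda>v. p - b (W - v)) = b"
    by (rule unique)
  from fun_cong[OF this, of v] show ?thesis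
    by simp
qed

lemma add_int_multiple_shift:
  fixes g :: "real \<Rightarrow> real"
  assumes shift: "\<And>v. g (v + W) = g v + p"
  shows "g (v + of_int k * W) = g v + of_int k * p"
proof (induction k rule: int_induct[where k = 0])
  case (step1 i)
  have "g (v + of_int (i + 1) * W) = g ((v + of_int i * W) + W)"
    by (simp add: distrib_right add.assoc)
  also have "\<dots> = g v + of_int i * p + p"
    using step1.IH shift by simp
  finally show ?case
    by (simp add: distrib_right)
next
  case (step2 i)
  have "v + of_int i * W = (v + of_int (i - 1) * W) + W"
    by (simp add: left_diff_distrib)
  then show ?case
    using step2.IH shift[of "v + of_int (i - 1) * W"] by (simp add: left_diff_distrib)
qed simp

lemma solves_autonomous_ivp_quasi_periodic:
  fixes f :: "real \<Rightarrow> real"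
  assumes b: "solves_autonomous_ivp f b" and unique: "\<And>c. solves_autonomous_ivp f c \<Longrightarrow> c = b"
    and pos: "\<And>x. 0 < f x" and "surj b" and "0 < p"
    and periodic: "\<And>x. f (x + p) = f x" and symmetric: "\<And>x. f (p - x) = f x"
  obtains W where "0 < W" "\<And>v. b (v + W) = b v + p"
    "\<And>k::int. b (of_int k * W) = of_int k * p"
    "\<And>k::int. odd k \<Longrightarrow> b (of_int k * W / 2) = of_int k * p / 2"
proof -
  obtain W where "b W = p"
    using \<open>surj b\<close> by (metis surjD)
  then have "0 < W"
    using solves_autonomous_ivp_strict_mono[OF pos b] b \<open>0 < p\<close>
    by (metis solves_autonomous_ivp_def strict_mono_less)
  have shift: "b (v + W) = b v + p" for v
    using solves_autonomous_ivp_shift[OF b unique periodic \<open>b W = p\<close>] .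
  have "b (W / 2) = p / 2"
    using solves_autonomous_ivp_reflect[OF b unique symmetric \<open>b W = p\<close>, of "W / 2"] by simp
  have "b (of_int k * W / 2) = of_int k * p / 2" if "odd k" for k :: int
  proof -
    obtain j where "k = 2 * j + 1"
      using \<open>odd k\<close> by (rule oddE)
    then have "of_int k * W / 2 = W / 2 + of_int j * W" and "of_int k * p / 2 = p / 2 + of_int j * p"
      by (simp_all add: field_simps)
    moreover have "b (W / 2 + of_int j * W) = b (W / 2) + of_int j * p"
      by (rule add_int_multiple_shift[where g = b, OF shift])
    ultimately show ?thesis
      using \<open>b (W / 2) = p / 2\<close> by metis
  qed
  moreover have "b (of_int k * W) = of_int k * p" for k :: int
    using add_int_multiple_shift[where g = b, OF shift, of 0 k] b
    by (simp add: solves_autonomous_ivp_def)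
  ultimately show thesis
    using that \<open>0 < W\<close> shift by blast
qed

lemma cos_sin_sq_combination_le:
  fixes a c x :: real
  assumes "c \<le> a"
  shows "a * (cos x)\<^sup>2 + c * (sin x)\<^sup>2 \<le> a"
proof -
  have "c * (sin x)\<^sup>2 \<le> a * (sin x)\<^sup>2"
    using assms by (simp add: mult_right_mono)
  moreover have "a * (cos x)\<^sup>2 + a * (sin x)\<^sup>2 = a"
    by (simp flip: distrib_left)
  ultimately show ?thesis
    by linarith
qed

lemma bRHS_pos:
  assumes "l2\<^sup>2 \<le> l1\<^sup>2" "l1 \<noteq> 0" "K < 1"
  shows "0 < bRHS l1 l2 K x"
proof -
  define Q where "Q = l1\<^sup>2 * (cos x)\<^sup>2 + l2\<^sup>2 * (sin x)\<^sup>2"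
  have "0 \<le> Q" "Q \<le> l1\<^sup>2"
    using cos_sin_sq_combination_le[OF assms(1)] by (simp_all add: Q_def)
  have "K * Q < l1\<^sup>2"
  proof (cases "0 \<le> K")
    case True
    then have "K * Q \<le> K * l1\<^sup>2"
      using \<open>Q \<le> l1\<^sup>2\<close> by (simp add: mult_left_mono)
    also have "\<dots> < l1\<^sup>2"
      using assms(2,3) by simp
    finally show ?thesis .
  next
    case False
    then show ?thesis
      using \<open>0 \<le> Q\<close> assms(2) by (smt (verit) mult_nonpos_nonneg zero_less_power2)
  qed
  then show ?thesis
    by (simp add: bRHS_def Q_def)
qed

lemma bRHS_le:
  assumes "l2\<^sup>2 \<le> l1\<^sup>2"
  shows "bRHS l1 l2 K x \<le> sqrt ((1 + \<bar>K\<bar>) * l1\<^sup>2)"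
proof -
  define Q where "Q = l1\<^sup>2 * (cos x)\<^sup>2 + l2\<^sup>2 * (sin x)\<^sup>2"
  have "0 \<le> Q" "Q \<le> l1\<^sup>2"
    using cos_sin_sq_combination_le[OF assms(1)] by (simp_all add: Q_def)
  then have "- K * Q \<le> \<bar>K\<bar> * l1\<^sup>2"
    by (smt (verit) abs_ge_minus_self abs_ge_zero mult_mono mult_right_mono)
  then show ?thesis
    by (simp add: bRHS_def Q_def algebra_simps)
qed

lemma bRHS_uminus: "bRHS l1 l2 K (- x) = bRHS l1 l2 K x"
  by (simp add: bRHS_def)

lemma bRHS_add_pi: "bRHS l1 l2 K (x + pi) = bRHS l1 l2 K x"
  by (simp add: bRHS_def)

lemma bRHS_pi_minus: "bRHS l1 l2 K (pi - x) = bRHS l1 l2 K x"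
  by (simp add: bRHS_def)

lemma is_b_solution_eq: "is_b_solution l1 l2 K = solves_autonomous_ivp (bRHS l1 l2 K)"
  by (simp add: fun_eq_iff is_b_solution_def solves_autonomous_ivp_def)

theorem proposition4p1:
  fixes l1 l2 K :: real
  assumes lam: "(l1 > l2 \<and> l2 > 0) \<or> (l1 = 1 \<and> l2 = 1)"
    and K: "-1 < K" "K < 1"
  shows "\<exists>b. is_b_solution l1 l2 K b \<and> (\<forall>c. is_b_solution l1 l2 K c \<longrightarrow> c = b) \<and>
     strict_mono b \<and> real_diffeo b \<and>
     (\<forall>v. b (- v) = - b v) \<and>
     (\<exists>W>0. (\<forall>v. b (v + W) = b v + pi) \<and>
            (\<forall>k::int. b (of_int k * W) = of_int k * pi) \<and>
            (\<forall>k::int. odd k \<longrightarrow> b (of_int k * W / 2) = of_int k * pi / 2))"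
proof -
  let ?f = "bRHS l1 l2 K"
  have l: "l2\<^sup>2 \<le> l1\<^sup>2" "l1 \<noteq> 0"
    using lam by (auto intro!: power_mono)
  have cont: "continuous_on UNIV ?f"
    unfolding bRHS_def by (intro continuous_intros)
  have pos: "\<And>x. 0 < ?f x"
    using bRHS_pos[OF l K(2)] .
  obtain b where b: "solves_autonomous_ivp ?f b" "bij b"
    using solves_autonomous_ivp_exists[OF cont pos bRHS_le[OF l(1)]] by blast
  have unique: "\<And>c. solves_autonomous_ivp ?f c \<Longrightarrow> c = b"
    using solves_autonomous_ivp_unique[OF cont pos] b(1) by blast
  obtain W where "0 < W" "\<And>v. b (v + W) = b v + pi"
    "\<And>k::int. b (of_int k * W) = of_int k * pi"
    "\<And>k::int. odd k \<Longrightarrow> b (of_int k * W / 2) = of_int k * pi / 2"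
    using solves_autonomous_ivp_quasi_periodic[OF b(1) unique pos bij_is_surj[OF b(2)] pi_gt_zero
        bRHS_add_pi bRHS_pi_minus] by blast
  then show ?thesis
    using b unique solves_autonomous_ivp_strict_mono[OF pos b(1)]
      solves_autonomous_ivp_odd[OF b(1) unique bRHS_uminus]
      solves_autonomous_ivp_real_diffeo[OF cont pos b]
    unfolding is_b_solution_eq by blast
qed

end
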